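(* Let $\{a_n\}_{n\ge1}$ be a sequence of nonzero complex numbers and let $w_n(z)$ ($n\ge0$) be the $n$-th approximant of the continued fraction $$\cfrac{a_1}{z-\cfrac{a_2}{1-\cfrac{a_3}{z-\cfrac{a_4}{1-\cdots}}}}$$ (partial denominators alternately $z$ and $1$; $w_0=0$). Then: (1) $w_n(z)$ is a rational function of degree $\lfloor\frac{n+1}{2}\rfloor$; for $n\ge1$, $w_n(z)\sim\frac{a_1}{z}$ and $w_n(z)-w_{n-1}(z)\sim\frac{a_1a_2\cdots a_n}{z^n}$ $(z\to\infty)$; in particular $\{w_n(z)-w_{n-1}(z)\}_{n\ge1}$ is an asymptotic sequence at $\infty$. Moreover $w_{2n}(z)$ coincides with the $n$-th approximant of the continued fraction $$\cfrac{a_1}{z-a_2-\cfrac{a_2a_3}{z-a_3-a_4-\cfrac{a_4a_5}{z-a_5-a_6-\cdots}}}.$$ (2) Let $f(z)$ be a complex-valued function defined on an unbounded subset $\mathfrak X$ of $\mathbb C\cup\{\infty\}$. The following are equivalent: (a) $f(z)\sim \cfrac{a_1}{z-\cfrac{a_2}{1-\cfrac{a_3}{z-\cfrac{a_4}{1-\cdots}}}}$ $(z\to\infty)_{\mathfrak X}$; (b) $f(z)\sim \cfrac{a_1}{z-a_2-\cfrac{a_2a_3}{z-a_3-a_4-\cfrac{a_4a_5}{z-a_5-a_6-\cdots}}}$ $(z\to\infty)_{\mathfrak X}$; (c) $f(z)-w_n(z)\sim\frac{a_1a_2\cdots a_{n+1}}{z^{n+1}}$ $(z\to\infty)_{\mathfrak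 X}$ for all $n\ge0$; (d) $f(z)-w_n(z)=O(z^{-(n+1)})$ $(z\to\infty)_{\mathfrak X}$ for all $n\ge0$; (e) $f(z)-w_n(z)=O(z^{-(n+1)})$ $(z\to\infty)_{\mathfrak X}$ for infinitely many $n\ge0$; (f) for every $n\ge0$, $w_{2n}(z)$ is the unique rational function $w(z)\in\mathbb C(z)$ of degree at most $n$ with $f(z)-w(z)=O(z^{-(2n+1)})$ $(z\to\infty)_{\mathfrak X}$; (g) for every $n\ge1$, $w_{2n}(z)$ is the unique Padé approximant of $f(z)$ over $\mathfrak X$ at $z=\infty$ of order $[n-1,n]$. (3) If the equivalent conditions in (2) hold, then the best rational approximations of $f(z)$ over $\mathfrak X$ are precisely the even-indexed approximants $w_{2n}(z)$, $n\ge0$.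
   Context: Asymptotic relations are as $z\to\infty$ within $\mathfrak X$: $f=O(g)$ if $|f|\le M|g|$ on a punctured neighbourhood of $\infty$ (intersected with $\mathfrak X$) for some $M>0$; $f=o(g)$ if for every $M>0$; $f\sim g$ if $f-g=o(g)$ and $g-f=o(f)$. Asymptotic sequence: $\varphi_{n+1}=o(\varphi_n)$ for all $n$. For a continued fraction $K$ with approximants $v_m$ ($v_0=0$), $f\sim K$ means $\{v_m-v_{m-1}\}_{m\ge1}$ is an asymptotic sequence and $f-v_m=O(v_{m+1}-v_m)$ for all $m\ge0$. Degree of a rational function: max of degrees of numerator and denominator in lowest terms. A best rational approximation of $f$ over $\mathfrak X$ is a $w\in\mathbb C(z)$ that is the unique $v\in\mathbb C(z)$ of degree $\le\deg w$ with $f-v=O(f-w)$ $(z\to\infty)_{\mathfrak X}$. The Padé approximant of $f$ over $\mathfrak X$ at $\infty$ of order $[n-1,n]$ is the unique $g/h$ with $\deg g\le n-1$, $h\ne0$, $\deg h\le n$, and $f-g/h=O(z^{-(2n+1)})$ $(z\to\infty)_{\mathfrak X}$. *)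

theory Defs
  imports "HOL-Computational_Algebra.Computational_Algebra" "HOL-Library.Landau_Symbols"
begin

type_synonym ratfun = "complex poly fract"

definition rz :: ratfun where "rz = to_fract [:0, 1:]"
definition rc :: "complex \<Rightarrow> ratfun" where "rc c = to_fract [:c:]"

definition lowest_terms :: "ratfun \<Rightarrow> complex poly \<Rightarrow> complex poly \<Rightarrow> bool" where
  "lowest_terms r p q \<longleftrightarrow> q \<noteq> 0 \<and> coprime p q \<and> r = to_fract p / to_fract q"

text \<open>Degree of a rational function: max of degrees of numerator and denominator in lowest terms
  (independent of the chosen lowest-terms representation).\<close>
definition rdeg :: "ratfun \<Rightarrow> nat" where
  "rdeg r = (SOME d. \<exists>p q. lowest_terms r p q \<and> d = max (degree p) (degree q))"

text \<open>Evaluation of a rational function at a point via a lowest-terms representation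
  (independent of the choice; poles are sent to 0, irrelevant as z \<rightarrow> \<infinity>).\<close>
definition reval :: "ratfun \<Rightarrow> complex \<Rightarrow> complex" where
  "reval r z = (case (SOME pq. lowest_terms r (fst pq) (snd pq)) of (p, q) \<Rightarrow> poly p z / poly q z)"

fun cf_tail :: "(nat \<Rightarrow> ratfun) \<Rightarrow> (nat \<Rightarrow> ratfun) \<Rightarrow> nat \<Rightarrow> nat \<Rightarrow> ratfun" where
  "cf_tail num den k 0 = 0"
| "cf_tail num den k (Suc m) = num k / (den k - cf_tail num den (Suc k) m)"

definition cf_approx :: "(nat \<Rightarrow> ratfun) \<Rightarrow> (nat \<Rightarrow> ratfun) \<Rightarrow> nat \<Rightarrow> ratfun" where
  "cf_approx num den n = cf_tail num den 1 n"

definition W :: "(nat \<Rightarrow> complex) \<Rightarrow> nat \<Rightarrow> ratfun" where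
  "W a = cf_approx (\<lambda>k. rc (a k)) (\<lambda>k. if odd k then rz else 1)"

text \<open>The continued fraction a1/(z - a2 - a2 a3/(z - a3 - a4 - a4 a5/(z - a5 - a6 - ...))).\<close>
definition J :: "(nat \<Rightarrow> complex) \<Rightarrow> nat \<Rightarrow> ratfun" where
  "J a = cf_approx (\<lambda>k. if k = 1 then rc (a 1) else rc (a (2*k - 2) * a (2*k - 1)))
                   (\<lambda>k. if k = 1 then rz - rc (a 2) else rz - rc (a (2*k - 1)) - rc (a (2*k)))"

definition unbounded_set :: "complex set \<Rightarrow> bool" where
  "unbounded_set X \<longleftrightarrow> (\<forall>R::real. \<exists>z\<in>X. norm z > R)"

definition at_inf_within :: "complex set \<Rightarrow> complex filter" where
  "at_inf_within X = inf at_infinity (principal X)"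

definition asym_equiv :: "complex filter \<Rightarrow> (complex \<Rightarrow> complex) \<Rightarrow> (complex \<Rightarrow> complex) \<Rightarrow> bool" where
  "asym_equiv F f g \<longleftrightarrow> (\<lambda>z. f z - g z) \<in> o[F](g) \<and> (\<lambda>z. g z - f z) \<in> o[F](f)"

definition asym_seq :: "complex filter \<Rightarrow> (nat \<Rightarrow> complex \<Rightarrow> complex) \<Rightarrow> bool" where
  "asym_seq F \<phi> \<longleftrightarrow> (\<forall>n. \<phi> (Suc n) \<in> o[F](\<phi> n))"

text \<open>f ~ K, where v m are the approximants of K (v 0 = 0).\<close>
definition cf_asymp :: "complex filter \<Rightarrow> (complex \<Rightarrow> complex) \<Rightarrow> (nat \<Rightarrow> complex \<Rightarrow> complex) \<Rightarrow> bool" where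
  "cf_asymp F f v \<longleftrightarrow> asym_seq F (\<lambda>m z. v (Suc m) z - v m z)
      \<and> (\<forall>m. (\<lambda>z. f z - v m z) \<in> O[F](\<lambda>z. v (Suc m) z - v m z))"

definition best_rat_approx :: "complex filter \<Rightarrow> (complex \<Rightarrow> complex) \<Rightarrow> ratfun \<Rightarrow> bool" where
  "best_rat_approx F f w \<longleftrightarrow>
     (\<forall>v. (rdeg v \<le> rdeg w \<and> (\<lambda>z. f z - reval v z) \<in> O[F](\<lambda>z. f z - reval w z)) \<longleftrightarrow> v = w)"

definition pade_at_inf :: "complex filter \<Rightarrow> (complex \<Rightarrow> complex) \<Rightarrow> nat \<Rightarrow> ratfun \<Rightarrow> bool" where
  "pade_at_inf F f n r \<longleftrightarrow> (\<exists>g h. degree g \<le> n - 1 \<and> h \<noteq> 0 \<and> degree h \<le> n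
      \<and> r = to_fract g / to_fract h
      \<and> (\<lambda>z. f z - poly g z / poly h z) \<in> O[F](\<lambda>z. inverse (z ^ (2*n+1))))"

end

theory Submission
  imports Defs "HOL-Computational_Algebra.Field_as_Ring"
begin

text \<open>
  The approximants are quotients w_n = A_n / B_n of solutions of the three-term recurrence of the
  continued fraction. B_n is monic of degree (n + 1) div 2, and the determinant identity
  A_(n+1) B_n - A_n B_(n+1) = a_1 ... a_(n+1) shows both that A_n / B_n is reduced and that
  w_(n+1) - w_n = a_1 ... a_(n+1) / (B_(n+1) B_n) ~ a_1 ... a_(n+1) / z^(n+1).
  Hence every asymptotic condition in (2) reduces to f - w_n = O(z^-(n+1)) for all n, and by
  telescoping such an estimate for one n yields it for all smaller n. Three steps of the recurrence
  starting at an even index make one step of the recurrence of the contracted fraction, so w_2n is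
  its n-th approximant. All uniqueness statements rest on one fact: a nonzero rational function
  whose denominator has degree at most m is not O(z^-(m+1)), so two rational functions with
  denominators of total degree at most 2n that both approximate f up to O(z^-(2n+1)) coincide.
\<close>

section \<open>Continuants\<close>

text \<open>Numerator and denominator of the tail b k / (d k - b (k+1) / (d (k+1) - ...)) with n levels.\<close>

fun cf_num :: "(nat \<Rightarrow> 'a::comm_ring_1) \<Rightarrow> (nat \<Rightarrow> 'a) \<Rightarrow> nat \<Rightarrow> nat \<Rightarrow> 'a" where
  "cf_num b d k 0 = 0"
| "cf_num b d k (Suc 0) = b k"
| "cf_num b d k (Suc (Suc n)) = d (k + n + 1) * cf_num b d k (Suc n) - b (k + n + 1) * cf_num b d k n"

fun cf_den :: "(nat \<Rightarrow> 'a::comm_ring_1) \<Rightarrow> (nat \<Rightarrow> 'a) \<Rightarrow> nat \<Rightarrow> nat \<Rightarrow> 'a" where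
  "cf_den b d k 0 = 1"
| "cf_den b d k (Suc 0) = d k"
| "cf_den b d k (Suc (Suc n)) = d (k + n + 1) * cf_den b d k (Suc n) - b (k + n + 1) * cf_den b d k n"

lemma cf_num_den_Suc_first:
  "cf_num b d k (Suc m) = b k * cf_den b d (Suc k) m \<and>
   cf_den b d k (Suc m) = d k * cf_den b d (Suc k) m - cf_num b d (Suc k) m"
proof (induction m rule: induct_nat_012)
  case (ge2 n)
  have idx: "k + Suc n + 1 = Suc k + n + 1" by simp
  show ?case
    unfolding cf_num.simps(3)[of b d k "Suc n"] cf_den.simps(3)[of b d k "Suc n"]
      cf_num.simps(3)[of b d "Suc k" n] cf_den.simps(3)[of b d "Suc k" n] idx
    by (simp only: ge2) (simp add: algebra_simps)
qed simp_all

lemma cf_num_Suc_first: "cf_num b d k (Suc m) = b k * cf_den b d (Suc k) m"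
  using cf_num_den_Suc_first by blast

lemma cf_den_Suc_first: "cf_den b d k (Suc m) = d k * cf_den b d (Suc k) m - cf_num b d (Suc k) m"
  using cf_num_den_Suc_first by blast

lemma cf_num_den_det:
  "cf_num b d k (Suc n) * cf_den b d k n - cf_num b d k n * cf_den b d k (Suc n) = (\<Prod>i=k..k+n. b i)"
proof (induction n)
  case (Suc n)
  have "cf_num b d k (Suc (Suc n)) * cf_den b d k (Suc n) - cf_num b d k (Suc n) * cf_den b d k (Suc (Suc n))
      = b (k + Suc n) * (cf_num b d k (Suc n) * cf_den b d k n - cf_num b d k n * cf_den b d k (Suc n))"
    by (simp only: cf_num.simps cf_den.simps) (simp add: algebra_simps)
  then show ?case by (simp add: Suc.IH prod.nat_ivl_Suc')
qed simp

lemma three_term_recurrence_unique: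
  assumes "\<And>n. x (Suc (Suc n)) = c n * x (Suc n) - e n * x n"
    and "\<And>n. y (Suc (Suc n)) = c n * y (Suc n) - e n * y n"
    and "x 0 = y 0" "x 1 = y 1"
  shows "x n = y n"
  by (induction n rule: induct_nat_012) (simp_all add: assms(1-3) assms(4)[unfolded One_nat_def])

lemma to_fract_cf_num: "to_fract (cf_num b d k n) = cf_num (\<lambda>i. to_fract (b i)) (\<lambda>i. to_fract (d i)) k n"
  by (induction b d k n rule: cf_num.induct) simp_all

lemma to_fract_cf_den: "to_fract (cf_den b d k n) = cf_den (\<lambda>i. to_fract (b i)) (\<lambda>i. to_fract (d i)) k n"
  by (induction b d k n rule: cf_den.induct) simp_all

lemma cf_tail_eq_num_div_den:
  assumes "\<And>j m. k < j \<Longrightarrow> cf_den b d j m \<noteq> 0"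
  shows "cf_tail b d k m = cf_num b d k m / cf_den b d k m"
  using assms
proof (induction m arbitrary: k)
  case (Suc m)
  have den: "cf_den b d (Suc k) m \<noteq> 0" using Suc.prems by simp
  have "cf_tail b d (Suc k) m = cf_num b d (Suc k) m / cf_den b d (Suc k) m"
    using Suc.prems by (intro Suc.IH) simp
  then have "d k - cf_tail b d (Suc k) m
      = (d k * cf_den b d (Suc k) m - cf_num b d (Suc k) m) / cf_den b d (Suc k) m"
    using den by (simp add: field_simps)
  then show ?case by (simp add: cf_num_Suc_first cf_den_Suc_first)
qed simp

lemma cf_approx_to_fract:
  assumes "\<And>j m. cf_den b d j m \<noteq> 0"
  shows "cf_approx (\<lambda>k. to_fract (b k)) (\<lambda>k. to_fract (d k)) n
       = to_fract (cf_num b d 1 n) / to_fract (cf_den b d 1 n)"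
  unfolding cf_approx_def to_fract_cf_num to_fract_cf_den
  by (rule cf_tail_eq_num_div_den) (simp add: to_fract_cf_den[symmetric] assms)

section \<open>Degrees and rational functions\<close>

lemma lead_coeff_diff_eq_left:
  fixes p q :: "'a::comm_ring_1 poly"
  shows "degree q < degree p \<Longrightarrow> lead_coeff (p - q) = lead_coeff p"
  by (metis add.commute degree_minus diff_conv_add_uminus lead_coeff_add_le)

lemma degree_diff_eq_left:
  fixes p q :: "'a::comm_ring_1 poly"
  shows "degree q < degree p \<Longrightarrow> degree (p - q) = degree p"
  by (metis add.commute degree_add_eq_right degree_minus diff_conv_add_uminus)

lemma cf_den_monic_degree:
  fixes b d :: "nat \<Rightarrow> 'a::idom poly"
  assumes monic: "\<And>j. lead_coeff (d j) = 1"
    and lower: "\<And>j. degree (b (Suc j)) < degree (d j) + degree (d (Suc j))"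
  shows "lead_coeff (cf_den b d k n) = 1 \<and> degree (cf_den b d k n) = (\<Sum>j=k..<k+n. degree (d j))"
proof (induction n rule: induct_nat_012)
  case (ge2 n)
  define P where "P = d (k + n + 1) * cf_den b d k (Suc n)"
  define Q where "Q = b (k + n + 1) * cf_den b d k n"
  have nz: "d j \<noteq> 0" "cf_den b d k (Suc n) \<noteq> 0" for j
    using monic[of j] ge2 by auto
  have "lead_coeff P = lead_coeff (d (k + n + 1)) * lead_coeff (cf_den b d k (Suc n))"
    unfolding P_def by (rule lead_coeff_mult)
  then have lead_P: "lead_coeff P = 1"
    using ge2 monic by (metis mult_1)
  have deg_P: "degree P = (\<Sum>j=k..<k + Suc (Suc n). degree (d j))"
    using ge2 nz by (simp add: P_def degree_mult_eq)
  have "degree Q \<le> degree (b (Suc (k + n))) + (\<Sum>j=k..<k+n. degree (d j))"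
    using degree_mult_le[of "b (Suc (k + n))" "cf_den b d k n"] ge2 by (simp add: Q_def)
  also have "\<dots> < (\<Sum>j=k..<k + Suc (Suc n). degree (d j))"
    using lower[of "k + n"] by simp
  finally have "degree Q < degree P" using deg_P by simp
  moreover have "cf_den b d k (Suc (Suc n)) = P - Q" by (simp add: P_def Q_def)
  ultimately show ?case
    using lead_P deg_P by (metis lead_coeff_diff_eq_left degree_diff_eq_left)
qed (simp_all add: monic)

lemma to_fract_div_eq_iff:
  fixes p q p' q' :: "'a::idom"
  assumes "q \<noteq> 0" "q' \<noteq> 0"
  shows "to_fract p / to_fract q = to_fract p' / to_fract q' \<longleftrightarrow> p * q' = p' * q"
  using assms by (simp add: eq_fract flip: Fract_conv_to_fract)

lemma lowest_terms_exists: "\<exists>p q. lowest_terms r p q"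
proof -
  have "snd (quot_of_fract r) \<noteq> 0" "coprime (fst (quot_of_fract r)) (snd (quot_of_fract r))"
    by (simp_all add: coprime_quot_of_fract)
  moreover have "r = to_fract (fst (quot_of_fract r)) / to_fract (snd (quot_of_fract r))"
    by (metis Fract_conv_to_fract Fract_quot_of_fract)
  ultimately show ?thesis unfolding lowest_terms_def by blast
qed

lemma lowest_terms_unique:
  assumes "lowest_terms r p q" "lowest_terms r p' q'"
  obtains c where "c \<noteq> 0" "p' = smult c p" "q' = smult c q"
proof -
  have q: "q \<noteq> 0" "coprime p q" and q': "q' \<noteq> 0" "coprime p' q'" and eq: "p * q' = p' * q"
    using assms by (auto simp: lowest_terms_def to_fract_div_eq_iff)
  have "q dvd q'"
    using eq q(2) by (metis coprime_commute coprime_dvd_mult_right_iff dvd_triv_right)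
  moreover have "q' dvd q"
    using eq q'(2) by (metis coprime_commute coprime_dvd_mult_right_iff dvd_triv_right)
  ultimately obtain u where "is_unit u" "q' = u * q"
    by (metis associatedE1 associatedI)
  then obtain c where "is_unit c" "q' = smult c q"
    by (auto simp: is_unit_poly_iff)
  then have c: "c \<noteq> 0" "q' = smult c q"
    by auto
  with eq q(1) have "p' = smult c p"
    by (metis mult_right_cancel mult_smult_left mult_smult_right)
  with c show ?thesis using that by blast
qed

lemma rdeg_lowest_terms:
  assumes "lowest_terms r p q"
  shows "rdeg r = max (degree p) (degree q)"
proof -
  have "\<exists>p q. lowest_terms r p q \<and> rdeg r = max (degree p) (degree q)"
    unfolding rdeg_def by (rule someI_ex) (use assms in blast)
  then obtain p' q' where "lowest_terms r p' q'" "rdeg r = max (degree p') (degree q')"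
    by blast
  then show ?thesis using lowest_terms_unique[OF assms] by fastforce
qed

lemma reval_lowest_terms:
  assumes "lowest_terms r p q"
  shows "reval r z = poly p z / poly q z"
proof -
  obtain p' q' where pq: "(SOME pq. lowest_terms r (fst pq) (snd pq)) = (p', q')"
    by fastforce
  have "lowest_terms r p' q'"
    using someI_ex[of "\<lambda>pq. lowest_terms r (fst pq) (snd pq)"] assms pq by auto
  then show ?thesis
    using lowest_terms_unique[OF assms] unfolding reval_def pq by fastforce
qed

lemma reval_eq_poly_div:
  assumes "q \<noteq> 0" "r = to_fract p / to_fract q" "poly q z \<noteq> 0"
  shows "reval r z = poly p z / poly q z"
proof -
  obtain p0 q0 where l: "lowest_terms r p0 q0"
    using lowest_terms_exists by blast
  then have "q0 \<noteq> 0" "coprime p0 q0" and eq: "p0 * q = p * q0"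
    using assms(1,2) by (auto simp: lowest_terms_def to_fract_div_eq_iff)
  then have "poly q0 z \<noteq> 0"
    using assms(3) by (metis coprime_poly_0 mult_eq_0_iff poly_mult)
  then show ?thesis
    using reval_lowest_terms[OF l] arg_cong[OF eq, of "\<lambda>s. poly s z"] assms(3)
    by (simp add: field_simps)
qed

lemma coprime_if_combination_const:
  fixes p q :: "'a::field poly"
  assumes "p * s - r * q = [:c:]" "c \<noteq> 0"
  shows "coprime p q"
proof (rule coprimeI)
  fix g assume "g dvd p" "g dvd q"
  then have "g dvd [:c:]"
    unfolding assms(1)[symmetric] by (simp add: dvd_diff dvd_mult2)
  then show "is_unit g"
    using assms(2) by (metis dvd_unit_imp_unit is_unit_triv)
qed

section \<open>Asymptotics at infinity\<close>

lemma eventually_norm_ge: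
  fixes F :: "'a::real_normed_vector filter"
  assumes "F \<le> at_infinity"
  shows "eventually (\<lambda>z. b \<le> norm z) F"
  using assms by (rule filter_leD) (auto simp: eventually_at_infinity)

lemma eventually_nonzero:
  fixes F :: "'a::real_normed_vector filter"
  assumes "F \<le> at_infinity"
  shows "eventually (\<lambda>z. z \<noteq> 0) F"
  using eventually_norm_ge[OF assms, of 1] by eventually_elim auto

lemma inverse_power_smallo:
  fixes F :: "'a::real_normed_field filter"
  assumes "F \<le> at_infinity" "m < n"
  shows "(\<lambda>z. inverse (z ^ n)) \<in> o[F](\<lambda>z. inverse (z ^ m))"
proof (rule landau_o.small.filter_mono[OF assms(1)], rule smalloI_tendsto)
  have "((\<lambda>z::'a. inverse z ^ (n - m)) \<longlongrightarrow> 0 ^ (n - m)) at_infinity"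
    by (intro tendsto_power tendsto_inverse_0)
  then have "((\<lambda>z::'a. inverse z ^ (n - m)) \<longlongrightarrow> 0) at_infinity"
    using assms(2) by (simp add: power_0_left)
  moreover have "eventually (\<lambda>z::'a. inverse z ^ (n - m) = inverse (z ^ n) / inverse (z ^ m)) at_infinity"
    using eventually_nonzero[OF order_refl]
    by eventually_elim (use assms(2) in \<open>simp add: power_diff power_inverse field_simps\<close>)
  ultimately show "((\<lambda>z::'a. inverse (z ^ n) / inverse (z ^ m)) \<longlongrightarrow> 0) at_infinity"
    by (rule Lim_transform_eventually)
  show "eventually (\<lambda>z::'a. inverse (z ^ m) \<noteq> 0) at_infinity"
    using eventually_nonzero[OF order_refl] by eventually_elim simp
qed

lemma inverse_power_bigo:
  fixes F :: "'a::real_normed_field filter"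
  assumes "F \<le> at_infinity" "m \<le> n"
  shows "(\<lambda>z. inverse (z ^ n)) \<in> O[F](\<lambda>z. inverse (z ^ m))"
  using assms inverse_power_smallo[OF assms(1), of m n] landau_o.small_imp_big
  by (cases "m = n") auto

lemma poly_div_power_degree_tendsto:
  fixes p :: "'a::real_normed_field poly"
  shows "((\<lambda>z. poly p z / z ^ degree p) \<longlongrightarrow> lead_coeff p) at_infinity"
proof -
  have "((\<lambda>z. poly (reflect_poly p) (inverse z)) \<longlongrightarrow> poly (reflect_poly p) 0) at_infinity"
    by (intro tendsto_intros tendsto_inverse_0)
  then have "((\<lambda>z. poly (reflect_poly p) (inverse z)) \<longlongrightarrow> lead_coeff p) at_infinity"
    by (simp add: poly_0_coeff_0)
  then show ?thesis
    by (rule Lim_transform_eventually) (use eventually_nonzero[OF order_refl] in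
        \<open>eventually_elim, simp add: poly_reflect_poly_nz divide_inverse power_inverse mult.commute\<close>)
qed

lemma poly_asymp_equiv:
  fixes p :: "'a::real_normed_field poly"
  assumes "p \<noteq> 0"
  shows "poly p \<sim>[at_infinity] (\<lambda>z. lead_coeff p * z ^ degree p)"
  using poly_div_power_degree_tendsto assms by (intro asymp_equivI'_const) simp_all

lemma monic_poly_asymp_equiv:
  fixes p :: "'a::real_normed_field poly"
  assumes "lead_coeff p = 1"
  shows "poly p \<sim>[at_infinity] (\<lambda>z. z ^ degree p)"
  using poly_asymp_equiv[of p] assms by (cases "p = 0") simp_all

lemma eventually_poly_nonzero:
  fixes p :: "'a::real_normed_field poly"
  assumes "p \<noteq> 0" "F \<le> at_infinity"
  shows "eventually (\<lambda>z. poly p z \<noteq> 0) F"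
proof -
  have "eventually (\<lambda>z. poly p z \<noteq> 0) at_infinity"
    using asymp_equiv_eventually_zeros[OF poly_asymp_equiv[OF assms(1)]] eventually_nonzero[OF order_refl]
    by eventually_elim (use assms(1) in simp)
  then show ?thesis by (rule filter_leD[OF assms(2)])
qed

lemma inverse_power_bigo_poly_div:
  fixes p q :: "'a::real_normed_field poly"
  assumes "p \<noteq> 0" "q \<noteq> 0" "degree q \<le> m + degree p"
  shows "(\<lambda>z. inverse (z ^ m)) \<in> O[at_infinity](\<lambda>z. poly p z / poly q z)"
proof (rule bigoI_tendsto)
  define k where "k = m + degree p - degree q"
  have "((\<lambda>z. (poly q z / z ^ degree q) / (poly p z / z ^ degree p) * inverse z ^ k)
      \<longlongrightarrow> lead_coeff q / lead_coeff p * 0 ^ k) at_infinity"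
    using assms(1) by (intro tendsto_intros poly_div_power_degree_tendsto tendsto_inverse_0) simp
  moreover have "eventually (\<lambda>z. (poly q z / z ^ degree q) / (poly p z / z ^ degree p) * inverse z ^ k
      = inverse (z ^ m) / (poly p z / poly q z)) at_infinity"
    using eventually_nonzero[OF order_refl] eventually_poly_nonzero[OF assms(1) order_refl]
  proof eventually_elim
    case (elim z)
    have "z ^ degree q * z ^ k = z ^ m * z ^ degree p"
      using assms(3) by (simp add: k_def flip: power_add)
    then show ?case using elim by (simp add: field_simps power_inverse)
  qed
  ultimately show "((\<lambda>z. inverse (z ^ m) / (poly p z / poly q z))
      \<longlongrightarrow> lead_coeff q / lead_coeff p * 0 ^ k) at_infinity"
    by (rule Lim_transform_eventually)
  show "eventually (\<lambda>z. poly p z / poly q z \<noteq> 0) at_infinity"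
    using eventually_poly_nonzero[OF assms(1) order_refl] eventually_poly_nonzero[OF assms(2) order_refl]
    by eventually_elim simp
qed

lemma inverse_power_bigo_fract_diff:
  fixes g1 h1 g2 h2 :: "'a::real_normed_field poly"
  assumes "F \<le> at_infinity" "h1 \<noteq> 0" "h2 \<noteq> 0" "degree h1 + degree h2 \<le> m"
    and "to_fract g1 / to_fract h1 \<noteq> to_fract g2 / to_fract h2"
  shows "(\<lambda>z. inverse (z ^ m)) \<in> O[F](\<lambda>z. poly g1 z / poly h1 z - poly g2 z / poly h2 z)"
proof -
  define s where "s = g1 * h2 - g2 * h1"
  have "s \<noteq> 0" using assms(2,3,5) by (simp add: s_def to_fract_div_eq_iff)
  moreover have "h1 * h2 \<noteq> 0" "degree (h1 * h2) \<le> m + degree s"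
    using assms(2-4) by (simp_all add: degree_mult_eq)
  ultimately have "(\<lambda>z. inverse (z ^ m)) \<in> O[F](\<lambda>z. poly s z / poly (h1 * h2) z)"
    by (intro landau_o.big.filter_mono[OF assms(1)] inverse_power_bigo_poly_div)
  moreover have "eventually (\<lambda>z. poly s z / poly (h1 * h2) z
      = poly g1 z / poly h1 z - poly g2 z / poly h2 z) F"
    using eventually_poly_nonzero[OF assms(2,1)] eventually_poly_nonzero[OF assms(3,1)]
    by eventually_elim (simp add: s_def field_simps)
  ultimately show ?thesis using landau_o.big.cong by metis
qed

lemma to_fract_eq_if_bigo_close:
  fixes g1 h1 g2 h2 :: "'a::real_normed_field poly"
  assumes F: "F \<le> at_infinity" "F \<noteq> bot"
    and "h1 \<noteq> 0" "h2 \<noteq> 0" "degree h1 + degree h2 \<le> m"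
    and close1: "(\<lambda>z. f z - poly g1 z / poly h1 z) \<in> O[F](\<lambda>z. inverse (z ^ (m + 1)))"
    and close2: "(\<lambda>z. f z - poly g2 z / poly h2 z) \<in> O[F](\<lambda>z. inverse (z ^ (m + 1)))"
  shows "to_fract g1 / to_fract h1 = to_fract g2 / to_fract h2"
proof (rule ccontr)
  assume "\<not> ?thesis"
  then have "(\<lambda>z. inverse (z ^ m)) \<in> O[F](\<lambda>z. poly g1 z / poly h1 z - poly g2 z / poly h2 z)"
    using assms(3-5) by (intro inverse_power_bigo_fract_diff[OF F(1)])
  also have "(\<lambda>z. poly g1 z / poly h1 z - poly g2 z / poly h2 z) \<in> O[F](\<lambda>z. inverse (z ^ (m + 1)))"
    using sum_in_bigo(2)[OF close2 close1] by simp
  also have "(\<lambda>z. inverse (z ^ (m + 1))) \<in> o[F](\<lambda>z. inverse (z ^ m))"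
    by (rule inverse_power_smallo[OF F(1)]) simp
  finally have "eventually (\<lambda>z. inverse (z ^ m) = 0) F"
    using landau_o.small_asymmetric by blast
  with eventually_nonzero[OF F(1)] have "eventually (\<lambda>_. False) F"
    by eventually_elim simp
  with F(2) show False by simp
qed

lemma asymp_equiv_filter_mono: "F \<le> G \<Longrightarrow> f \<sim>[G] g \<Longrightarrow> f \<sim>[F] g"
  unfolding asymp_equiv_def using tendsto_mono by blast

lemma bigtheta_add_smallo:
  assumes "f \<in> \<Theta>[F](h)" "g \<in> o[F](h)"
  shows "(\<lambda>x. f x + g x) \<in> \<Theta>[F](h)"
proof -
  have "g \<in> o[F](f)"
    using assms(2) bigtheta_sym[THEN iffD1, OF assms(1)] by (rule landau_o.small.bigtheta_trans1)
  then have "\<Theta>[F](\<lambda>x. f x + g x) = \<Theta>[F](f)"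
    by (rule landau_theta.plus_absorb2)
  then have "(\<lambda>x. f x + g x) \<in> \<Theta>[F](f)"
    using bigtheta_refl by blast
  then show ?thesis
    using assms(1) by (rule landau_theta.bigtheta_trans1)
qed

lemma bigo_add_if_smallo: "f \<in> o[F](g) \<Longrightarrow> f \<in> O[F](\<lambda>x. f x + g x)"
  by (simp add: landau_o.big.plus_absorb1 landau_o.small_imp_big)

lemma bigtheta_inverse_power_if_asymp_equiv:
  fixes g :: "'a::real_normed_field \<Rightarrow> 'a"
  assumes "g \<sim>[at_infinity] (\<lambda>z. c / z ^ k)" "c \<noteq> 0" "F \<le> at_infinity"
  shows "g \<in> \<Theta>[F](\<lambda>z. inverse (z ^ k))"
proof -
  have "g \<in> \<Theta>[at_infinity](\<lambda>z. c * inverse (z ^ k))"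
    using asymp_equiv_imp_bigtheta[OF assms(1)] by (simp add: divide_inverse)
  then show ?thesis
    using assms(2) by (intro landau_theta.filter_mono[OF assms(3)]) simp
qed

lemma pade_at_inf_imp_bigo:
  assumes "F \<le> at_infinity" "pade_at_inf F f n r"
  shows "(\<lambda>z. f z - reval r z) \<in> O[F](\<lambda>z. inverse (z ^ (2 * n + 1)))"
proof -
  obtain g h where gh: "h \<noteq> 0" "r = to_fract g / to_fract h"
    and close: "(\<lambda>z. f z - poly g z / poly h z) \<in> O[F](\<lambda>z. inverse (z ^ (2 * n + 1)))"
    using assms(2) unfolding pade_at_inf_def by blast
  have "eventually (\<lambda>z. f z - poly g z / poly h z = f z - reval r z) F"
    using eventually_poly_nonzero[OF gh(1) assms(1)]
    by eventually_elim (simp add: reval_eq_poly_div[OF gh])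
  with close show ?thesis
    by (simp only: landau_o.big.in_cong)
qed

lemma at_inf_within_le_at_infinity: "at_inf_within X \<le> at_infinity"
  by (simp add: at_inf_within_def)

lemma at_inf_within_neq_bot:
  assumes "unbounded_set X"
  shows "at_inf_within X \<noteq> bot"
proof
  assume "at_inf_within X = bot"
  then have "eventually (\<lambda>_. False) (at_inf_within X)"
    by simp
  then have "eventually (\<lambda>z. z \<in> X \<longrightarrow> False) at_infinity"
    unfolding at_inf_within_def eventually_inf_principal .
  then obtain b where b: "\<And>z. b \<le> norm z \<Longrightarrow> z \<notin> X"
    unfolding eventually_at_infinity by blast
  obtain z where "z \<in> X" "norm z > b"
    using assms unfolding unbounded_set_def by blast
  with b show False
    by fastforce
qed

section \<open>Approximant sequences\<close>

lemma asym_equiv_iff_asymp_equiv: "asym_equiv F f g \<longleftrightarrow> f \<sim>[F] g"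
  unfolding asym_equiv_def using asymp_equiv_altdef asymp_equiv_sym by metis

lemma asym_seq_if_bigtheta:
  assumes "\<And>m. \<phi> m \<in> \<Theta>[F](\<psi> m)" "\<And>m. \<psi> (Suc m) \<in> o[F](\<psi> m)"
  shows "asym_seq F \<phi>"
  unfolding asym_seq_def
proof
  fix m
  have "\<phi> (Suc m) \<in> o[F](\<psi> m)"
    using assms(1) assms(2) by (rule landau_o.small.bigtheta_trans2)
  then show "\<phi> (Suc m) \<in> o[F](\<phi> m)"
    using bigtheta_sym[THEN iffD1, OF assms(1)[of m]] by (rule landau_o.small.bigtheta_trans1)
qed

lemma cf_asymp_iff_remainders_bigo:
  assumes "\<And>m. (\<lambda>z. v (Suc m) z - v m z) \<in> \<Theta>[F](\<psi> m)" "\<And>m. \<psi> (Suc m) \<in> o[F](\<psi> m)"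
  shows "cf_asymp F f v \<longleftrightarrow> (\<forall>m. (\<lambda>z. f z - v m z) \<in> O[F](\<psi> m))"
  using asym_seq_if_bigtheta[of "\<lambda>m z. v (Suc m) z - v m z", OF assms]
    landau_o.big.cong_bigtheta[OF assms(1)]
  unfolding cf_asymp_def by simp

lemma remainders_asymp_equiv_iff_bigo:
  fixes v :: "nat \<Rightarrow> 'a \<Rightarrow> 'b::real_normed_field"
  assumes diff: "\<And>m. (\<lambda>z. v (Suc m) z - v m z) \<sim>[F] g m"
    and "\<And>m. g m \<in> \<Theta>[F](\<psi> m)" "\<And>m. \<psi> (Suc m) \<in> o[F](\<psi> m)"
  shows "(\<forall>m. (\<lambda>z. f z - v m z) \<sim>[F] g m) \<longleftrightarrow> (\<forall>m. (\<lambda>z. f z - v m z) \<in> O[F](\<psi> m))"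
proof (intro iffI allI)
  fix m assume "\<forall>m. (\<lambda>z. f z - v m z) \<sim>[F] g m"
  then have "(\<lambda>z. f z - v m z) \<in> O[F](g m)"
    using asymp_equiv_imp_bigo by blast
  then show "(\<lambda>z. f z - v m z) \<in> O[F](\<psi> m)"
    using assms(2) by (rule landau_o.big.bigtheta_trans1)
next
  fix m assume "\<forall>m. (\<lambda>z. f z - v m z) \<in> O[F](\<psi> m)"
  then have "(\<lambda>z. f z - v (Suc m) z) \<in> o[F](\<psi> m)"
    using assms(3) by (blast intro: landau_o.big_small_trans)
  then have "(\<lambda>z. f z - v (Suc m) z) \<in> o[F](g m)"
    using bigtheta_sym[THEN iffD1, OF assms(2)[of m]] by (rule landau_o.small.bigtheta_trans1)
  then have "(\<lambda>z. (v (Suc m) z - v m z) + (f z - v (Suc m) z)) \<sim>[F] g m"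
    by (subst asymp_equiv_add_right) (use diff in auto)
  then show "(\<lambda>z. f z - v m z) \<sim>[F] g m"
    by simp
qed

lemma remainder_bigo_downward:
  fixes v :: "nat \<Rightarrow> 'a \<Rightarrow> 'b::real_normed_field"
  assumes diff: "\<And>m. (\<lambda>z. v (Suc m) z - v m z) \<in> O[F](\<psi> m)"
    and decr: "\<And>m. \<psi> (Suc m) \<in> O[F](\<psi> m)"
    and "n \<le> N" "(\<lambda>z. f z - v N z) \<in> O[F](\<psi> N)"
  shows "(\<lambda>z. f z - v n z) \<in> O[F](\<psi> n)"
  using assms(3)
proof (induction n rule: inc_induct)
  case base
  show ?case by (rule assms(4))
next
  case (step n)
  have "(\<lambda>z. f z - v (Suc n) z) \<in> O[F](\<psi> n)"
    using step.IH decr by (rule landau_o.big_trans)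
  then have "(\<lambda>z. (v (Suc n) z - v n z) + (f z - v (Suc n) z)) \<in> O[F](\<psi> n)"
    by (rule sum_in_bigo(1)[OF diff])
  then show ?case
    by simp
qed

section \<open>The approximants and their even contraction\<close>

definition W_pnum :: "(nat \<Rightarrow> complex) \<Rightarrow> nat \<Rightarrow> complex poly" where
  "W_pnum a k = [:a k:]"

definition W_pden :: "nat \<Rightarrow> complex poly" where
  "W_pden k = (if odd k then [:0, 1:] else 1)"

abbreviation W_num :: "(nat \<Rightarrow> complex) \<Rightarrow> nat \<Rightarrow> complex poly" where
  "W_num a \<equiv> cf_num (W_pnum a) W_pden 1"

abbreviation W_den :: "(nat \<Rightarrow> complex) \<Rightarrow> nat \<Rightarrow> complex poly" where
  "W_den a \<equiv> cf_den (W_pnum a) W_pden 1"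

lemma W_tail_den_monic_degree:
  "lead_coeff (cf_den (W_pnum a) W_pden k n) = 1
   \<and> degree (cf_den (W_pnum a) W_pden k n) = (n + (if odd k then 1 else 0)) div 2"
proof -
  have "lead_coeff (W_pden j) = 1" for j
    by (simp add: W_pden_def)
  moreover have "degree (W_pnum a (Suc j)) < degree (W_pden j) + degree (W_pden (Suc j))" for j
    by (simp add: W_pnum_def W_pden_def)
  ultimately have "lead_coeff (cf_den (W_pnum a) W_pden k n) = 1
      \<and> degree (cf_den (W_pnum a) W_pden k n) = (\<Sum>j=k..<k+n. degree (W_pden j))"
    by (rule cf_den_monic_degree)
  moreover have "(\<Sum>j=k..<k+n. degree (W_pden j)) = (n + (if odd k then 1 else 0)) div 2"
    by (induction n) (simp_all add: W_pden_def)
  ultimately show ?thesis by metis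
qed

lemma W_tail_den_nonzero: "cf_den (W_pnum a) W_pden k n \<noteq> 0"
  using W_tail_den_monic_degree[of a k n] by auto

lemma W_den_monic: "lead_coeff (W_den a n) = 1"
  using W_tail_den_monic_degree by blast

lemma W_den_degree: "degree (W_den a n) = (n + 1) div 2"
  using W_tail_den_monic_degree[of a 1 n] by simp

lemma W_num_Suc: "W_num a (Suc m) = [:a 1:] * cf_den (W_pnum a) W_pden 2 m"
  by (simp add: cf_num_Suc_first W_pnum_def numeral_2_eq_2)

lemma W_num_degree: "degree (W_num a (Suc m)) \<le> m div 2"
  unfolding W_num_Suc
  using degree_mult_le[of "[:a 1:]" "cf_den (W_pnum a) W_pden 2 m"] W_tail_den_monic_degree[of a 2 m]
  by simp

lemma W_num_den_det:
  "W_num a (Suc m) * W_den a m - W_num a m * W_den a (Suc m) = [:\<Prod>i=1..Suc m. a i:]"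
proof -
  have "(\<Prod>i\<in>A. [:a i:]) = [:\<Prod>i\<in>A. a i:]" for A
    by (induction A rule: infinite_finite_induct) (simp_all add: mult.commute)
  then show ?thesis using cf_num_den_det[of "W_pnum a" W_pden 1 m] by (simp add: W_pnum_def)
qed

lemma W_eq_num_div_den: "W a n = to_fract (W_num a n) / to_fract (W_den a n)"
proof -
  have "(\<lambda>k. rc (a k)) = (\<lambda>k. to_fract (W_pnum a k))"
    and "(\<lambda>k. if odd k then rz else 1) = (\<lambda>k. to_fract (W_pden k))"
    by (simp_all add: fun_eq_iff W_pnum_def W_pden_def rc_def rz_def)
  then show ?thesis unfolding W_def by (simp add: cf_approx_to_fract W_tail_den_nonzero)
qed

definition J_pnum :: "(nat \<Rightarrow> complex) \<Rightarrow> nat \<Rightarrow> complex poly" where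
  "J_pnum a k = (if k = 1 then [:a 1:] else [:a (2*k - 2) * a (2*k - 1):])"

definition J_pden :: "(nat \<Rightarrow> complex) \<Rightarrow> nat \<Rightarrow> complex poly" where
  "J_pden a k = (if k = 1 then [:0, 1:] - [:a 2:] else [:0, 1:] - [:a (2*k - 1):] - [:a (2*k):])"

abbreviation J_num :: "(nat \<Rightarrow> complex) \<Rightarrow> nat \<Rightarrow> complex poly" where
  "J_num a \<equiv> cf_num (J_pnum a) (J_pden a) 1"

abbreviation J_den :: "(nat \<Rightarrow> complex) \<Rightarrow> nat \<Rightarrow> complex poly" where
  "J_den a \<equiv> cf_den (J_pnum a) (J_pden a) 1"

lemma J_eq_num_div_den: "J a n = to_fract (J_num a n) / to_fract (J_den a n)"
proof -
  have "lead_coeff (J_pden a j) = 1" "degree (J_pden a j) = 1" "degree (J_pnum a j) = 0" for j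
    by (simp_all add: J_pden_def J_pnum_def)
  then have "cf_den (J_pnum a) (J_pden a) j m \<noteq> 0" for j m
    using cf_den_monic_degree[of "J_pden a" "J_pnum a" j m] by fastforce
  moreover have "(\<lambda>k. if k = 1 then rc (a 1) else rc (a (2*k - 2) * a (2*k - 1))) = (\<lambda>k. to_fract (J_pnum a k))"
    and "(\<lambda>k. if k = 1 then rz - rc (a 2) else rz - rc (a (2*k - 1)) - rc (a (2*k)))
       = (\<lambda>k. to_fract (J_pden a k))"
    by (simp_all add: fun_eq_iff J_pnum_def J_pden_def rc_def rz_def flip: to_fract_diff)
  ultimately show ?thesis unfolding J_def by (simp add: cf_approx_to_fract)
qed

lemma even_contraction_identity:
  fixes x0 x1 x2 x3 x4 :: "'a::comm_ring_1"
  assumes "x4 = x3 - c4 * x2" "x3 = z * x2 - c3 * x1" "x2 = x1 - c2 * x0"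
  shows "x4 = (z - c3 - c4) * x2 - (c2 * c3) * x0"
proof -
  have "x1 = x2 + c2 * x0" using assms(3) by simp
  then show ?thesis using assms(1,2) by (simp add: algebra_simps)
qed

lemma W_recurrence_contracts:
  assumes rec: "\<And>n. x (Suc (Suc n)) = W_pden (Suc (Suc n)) * x (Suc n) - W_pnum a (Suc (Suc n)) * x n"
  shows "x (2 * Suc (Suc n)) = J_pden a (Suc (Suc n)) * x (2 * Suc n) - J_pnum a (Suc (Suc n)) * x (2 * n)"
proof -
  define m where "m = 2 * n"
  have idx: "2 * Suc (Suc n) = Suc (Suc (Suc (Suc m)))" "2 * Suc n = Suc (Suc m)"
    by (simp_all add: m_def)
  have "W_pden (Suc (Suc (Suc (Suc m)))) = 1" "W_pden (Suc (Suc (Suc m))) = [:0, 1:]"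
    "W_pden (Suc (Suc m)) = 1"
    by (simp_all add: W_pden_def m_def)
  then have "x (Suc (Suc (Suc (Suc m)))) = x (Suc (Suc (Suc m))) - [:a (Suc (Suc (Suc (Suc m)))):] * x (Suc (Suc m))"
    "x (Suc (Suc (Suc m))) = [:0, 1:] * x (Suc (Suc m)) - [:a (Suc (Suc (Suc m))):] * x (Suc m)"
    "x (Suc (Suc m)) = x (Suc m) - [:a (Suc (Suc m)):] * x m"
    using rec[of "Suc (Suc m)"] rec[of "Suc m"] rec[of m] by (simp_all add: W_pnum_def)
  moreover have "J_pden a (Suc (Suc n)) = [:0, 1:] - [:a (Suc (Suc (Suc m))):] - [:a (Suc (Suc (Suc (Suc m)))):]"
    and "J_pnum a (Suc (Suc n)) = [:a (Suc (Suc m)):] * [:a (Suc (Suc (Suc m))):]"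
    by (simp_all add: J_pden_def J_pnum_def m_def)
  ultimately show ?thesis
    unfolding idx m_def[symmetric] by (metis even_contraction_identity)
qed

lemma W_even_eq_J: "W a (2 * n) = J a n"
proof -
  have "W_num a (2 * n) = J_num a n"
  proof (rule three_term_recurrence_unique[where c = "\<lambda>n. J_pden a (Suc (Suc n))"
        and e = "\<lambda>n. J_pnum a (Suc (Suc n))"])
    show "W_num a (2 * Suc (Suc m)) = J_pden a (Suc (Suc m)) * W_num a (2 * Suc m)
        - J_pnum a (Suc (Suc m)) * W_num a (2 * m)" for m
      by (rule W_recurrence_contracts) simp
  qed (simp_all add: numeral_2_eq_2 W_pden_def W_pnum_def J_pnum_def)
  moreover have "W_den a (2 * n) = J_den a n"
  proof (rule three_term_recurrence_unique[where c = "\<lambda>n. J_pden a (Suc (Suc n))"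
        and e = "\<lambda>n. J_pnum a (Suc (Suc n))"])
    show "W_den a (2 * Suc (Suc m)) = J_pden a (Suc (Suc m)) * W_den a (2 * Suc m)
        - J_pnum a (Suc (Suc m)) * W_den a (2 * m)" for m
      by (rule W_recurrence_contracts) simp
  qed (simp_all add: numeral_2_eq_2 W_pden_def W_pnum_def J_pden_def)
  ultimately show ?thesis by (simp add: W_eq_num_div_den J_eq_num_div_den)
qed

section \<open>Characterisations of the asymptotic expansion\<close>

locale nonzero_partial_numerators =
  fixes a :: "nat \<Rightarrow> complex"
  assumes partial_numerator_nonzero: "\<And>n. n \<ge> 1 \<Longrightarrow> a n \<noteq> 0"
begin

lemma W_lowest_terms:
  "lowest_terms (W a n) (W_num a n) (W_den a n)"
proof -
  have "coprime (W_num a n) (W_den a n)"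
  proof (cases n)
    case (Suc m)
    have "(\<Prod>i=1..Suc m. a i) \<noteq> 0" using partial_numerator_nonzero by simp
    then show ?thesis
      using W_num_den_det[of a m] coprime_if_combination_const Suc by blast
  qed simp
  then show ?thesis
    by (simp add: lowest_terms_def W_eq_num_div_den W_tail_den_nonzero)
qed

lemma rdeg_W:
  "rdeg (W a n) = (n + 1) div 2"
proof -
  have "degree (W_num a n) \<le> (n + 1) div 2"
    using W_num_degree[of a "n - 1"] by (cases n) auto
  then show ?thesis
    using rdeg_lowest_terms[OF W_lowest_terms] W_den_degree by simp
qed

lemma reval_W:
  "reval (W a n) z = poly (W_num a n) z / poly (W_den a n) z"
  by (rule reval_lowest_terms[OF W_lowest_terms])

lemma W_diff_eq:
  assumes "poly (W_den a (Suc m)) z \<noteq> 0" "poly (W_den a m) z \<noteq> 0"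
  shows "reval (W a (Suc m)) z - reval (W a m) z
       = (\<Prod>i=1..Suc m. a i) / poly (W_den a (Suc m) * W_den a m) z"
proof -
  have "poly (W_num a (Suc m)) z * poly (W_den a m) z - poly (W_num a m) z * poly (W_den a (Suc m)) z
      = (\<Prod>i=1..Suc m. a i)"
    using arg_cong[OF W_num_den_det[of a m], of "\<lambda>s. poly s z"] by simp
  then show ?thesis
    by (simp only: reval_W diff_frac_eq[OF assms] poly_mult)
qed

lemma W_diff_asymp_equiv:
  "(\<lambda>z. reval (W a (Suc m)) z - reval (W a m) z) \<sim>[at_infinity] (\<lambda>z. (\<Prod>i=1..Suc m. a i) / z ^ Suc m)"
proof -
  let ?Q = "W_den a (Suc m) * W_den a m"
  have "lead_coeff ?Q = 1"
    by (simp only: lead_coeff_mult W_den_monic mult_1)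
  moreover have "degree ?Q = degree (W_den a (Suc m)) + degree (W_den a m)"
    by (rule degree_mult_eq) (rule W_tail_den_nonzero)+
  then have "degree ?Q = Suc m"
    by (simp only: W_den_degree)
  ultimately have "poly ?Q \<sim>[at_infinity] (\<lambda>z. z ^ Suc m)"
    using monic_poly_asymp_equiv by metis
  then have "(\<lambda>z. (\<Prod>i=1..Suc m. a i) / poly ?Q z) \<sim>[at_infinity] (\<lambda>z. (\<Prod>i=1..Suc m. a i) / z ^ Suc m)"
    by (intro asymp_equiv_divide asymp_equiv_refl)
  moreover have "eventually (\<lambda>z. (\<Prod>i=1..Suc m. a i) / poly ?Q z
      = reval (W a (Suc m)) z - reval (W a m) z) at_infinity"
    using eventually_poly_nonzero[OF W_tail_den_nonzero[of a 1 "Suc m"] order_refl]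
      eventually_poly_nonzero[OF W_tail_den_nonzero[of a 1 m] order_refl]
    by eventually_elim (simp add: W_diff_eq)
  ultimately show ?thesis
    by (rule asymp_equiv_transfer) simp
qed

lemma W_asymp_equiv:
  "reval (W a (Suc m)) \<sim>[at_infinity] (\<lambda>z. a 1 / z)"
proof -
  let ?B = "cf_den (W_pnum a) W_pden 2 m"
  have "poly ?B \<sim>[at_infinity] (\<lambda>z. z ^ (m div 2))"
    using monic_poly_asymp_equiv W_tail_den_monic_degree[of a 2 m] by fastforce
  moreover have "degree (W_den a (Suc m)) = Suc (m div 2)"
    using W_den_degree[of a "Suc m"] by simp
  then have "poly (W_den a (Suc m)) \<sim>[at_infinity] (\<lambda>z. z ^ Suc (m div 2))"
    using monic_poly_asymp_equiv[OF W_den_monic[of a "Suc m"]] by (simp only:)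
  ultimately have "(\<lambda>z. a 1 * poly ?B z / poly (W_den a (Suc m)) z)
      \<sim>[at_infinity] (\<lambda>z. a 1 * z ^ (m div 2) / z ^ Suc (m div 2))"
    by (intro asymp_equiv_intros)
  moreover have "eventually (\<lambda>z. a 1 * poly ?B z / poly (W_den a (Suc m)) z = reval (W a (Suc m)) z) at_infinity"
    using W_num_Suc[of a m] by (simp add: reval_W)
  moreover have "eventually (\<lambda>z. a 1 * z ^ (m div 2) / z ^ Suc (m div 2) = a 1 / z) at_infinity"
    using eventually_nonzero[OF order_refl] by eventually_elim simp
  ultimately show ?thesis
    by (rule asymp_equiv_transfer)
qed

lemma W_diff_bigtheta:
  assumes F: "F \<le> at_infinity"
  shows "(\<lambda>z. reval (W a (Suc m)) z - reval (W a m) z) \<in> \<Theta>[F](\<lambda>z. inverse (z ^ (m + 1)))"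
  using bigtheta_inverse_power_if_asymp_equiv[OF W_diff_asymp_equiv _ F] partial_numerator_nonzero by simp

lemma cf_asymp_W_iff:
  assumes F: "F \<le> at_infinity"
  shows "cf_asymp F f (\<lambda>n. reval (W a n))
     \<longleftrightarrow> (\<forall>n. (\<lambda>z. f z - reval (W a n) z) \<in> O[F](\<lambda>z. inverse (z ^ (n + 1))))"
proof (rule cf_asymp_iff_remainders_bigo)
  show "(\<lambda>z. reval (W a (Suc m)) z - reval (W a m) z) \<in> \<Theta>[F](\<lambda>z. inverse (z ^ (m + 1)))" for m
    by (rule W_diff_bigtheta[OF F])
  show "(\<lambda>z. inverse (z ^ (Suc m + 1))) \<in> o[F](\<lambda>z. inverse (z ^ (m + 1)))" for m
    by (rule inverse_power_smallo[OF F]) simp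
qed

lemma W_remainders_asymp_equiv_iff:
  assumes F: "F \<le> at_infinity"
  shows "(\<forall>n. asym_equiv F (\<lambda>z. f z - reval (W a n) z) (\<lambda>z. (\<Prod>k=1..n+1. a k) / z ^ (n + 1)))
     \<longleftrightarrow> (\<forall>n. (\<lambda>z. f z - reval (W a n) z) \<in> O[F](\<lambda>z. inverse (z ^ (n + 1))))"
  unfolding asym_equiv_iff_asymp_equiv
proof (rule remainders_asymp_equiv_iff_bigo)
  show "(\<lambda>z. reval (W a (Suc m)) z - reval (W a m) z) \<sim>[F] (\<lambda>z. (\<Prod>k=1..m+1. a k) / z ^ (m + 1))" for m
    using asymp_equiv_filter_mono[OF F W_diff_asymp_equiv] by simp
  show "(\<lambda>z. (\<Prod>k=1..m+1. a k) / z ^ (m + 1)) \<in> \<Theta>[F](\<lambda>z. inverse (z ^ (m + 1)))" for m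
    using partial_numerator_nonzero by (intro bigtheta_inverse_power_if_asymp_equiv[OF asymp_equiv_refl _ F]) simp
  show "(\<lambda>z. inverse (z ^ (Suc m + 1))) \<in> o[F](\<lambda>z. inverse (z ^ (m + 1)))" for m
    by (rule inverse_power_smallo[OF F]) simp
qed

lemma W_remainder_bigo_downward:
  assumes F: "F \<le> at_infinity"
    and "n \<le> N" "(\<lambda>z. f z - reval (W a N) z) \<in> O[F](\<lambda>z. inverse (z ^ (N + 1)))"
  shows "(\<lambda>z. f z - reval (W a n) z) \<in> O[F](\<lambda>z. inverse (z ^ (n + 1)))"
proof (rule remainder_bigo_downward[where v = "\<lambda>n. reval (W a n)" and \<psi> = "\<lambda>n z. inverse (z ^ (n + 1))",
      OF _ _ assms(2,3)])
  show "(\<lambda>z. reval (W a (Suc m)) z - reval (W a m) z) \<in> O[F](\<lambda>z. inverse (z ^ (m + 1)))" for m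
    using W_diff_bigtheta[OF F] by (rule bigthetaD1)
  show "(\<lambda>z. inverse (z ^ (Suc m + 1))) \<in> O[F](\<lambda>z. inverse (z ^ (m + 1)))" for m
    by (rule inverse_power_bigo[OF F]) simp
qed

lemma W_remainders_bigo_iff_infinite:
  assumes F: "F \<le> at_infinity"
  shows "infinite {n. (\<lambda>z. f z - reval (W a n) z) \<in> O[F](\<lambda>z. inverse (z ^ (n + 1)))}
     \<longleftrightarrow> (\<forall>n. (\<lambda>z. f z - reval (W a n) z) \<in> O[F](\<lambda>z. inverse (z ^ (n + 1))))"
    (is "infinite {n. ?R n} \<longleftrightarrow> _")
proof
  assume "infinite {n. ?R n}"
  then have "\<exists>N\<ge>n. ?R N" for n
    unfolding infinite_nat_iff_unbounded_le by blast
  show "\<forall>n. ?R n"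
  proof
    fix n
    obtain N where "n \<le> N" "?R N"
      using \<open>\<exists>N\<ge>n. ?R N\<close> by blast
    then show "?R n"
      by (rule W_remainder_bigo_downward[OF F])
  qed
qed simp

lemma W_remainders_bigo_if_even:
  assumes F: "F \<le> at_infinity"
    and even: "\<And>n. n \<ge> 1 \<Longrightarrow> (\<lambda>z. f z - reval (W a (2 * n)) z) \<in> O[F](\<lambda>z. inverse (z ^ (2 * n + 1)))"
  shows "(\<lambda>z. f z - reval (W a n) z) \<in> O[F](\<lambda>z. inverse (z ^ (n + 1)))"
proof (rule W_remainder_bigo_downward[OF F])
  show "n \<le> 2 * Suc n"
    by simp
  show "(\<lambda>z. f z - reval (W a (2 * Suc n)) z) \<in> O[F](\<lambda>z. inverse (z ^ (2 * Suc n + 1)))"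
    by (rule even) simp
qed

lemma J_diff_bigtheta:
  assumes F: "F \<le> at_infinity"
  shows "(\<lambda>z. reval (J a (Suc m)) z - reval (J a m) z) \<in> \<Theta>[F](\<lambda>z. inverse (z ^ (2 * m + 1)))"
proof -
  have "(\<lambda>z. (reval (W a (Suc (2 * m))) z - reval (W a (2 * m)) z)
           + (reval (W a (Suc (Suc (2 * m)))) z - reval (W a (Suc (2 * m))) z))
      \<in> \<Theta>[F](\<lambda>z. inverse (z ^ (2 * m + 1)))"
  proof (rule bigtheta_add_smallo)
    show "(\<lambda>z. reval (W a (Suc (2 * m))) z - reval (W a (2 * m)) z) \<in> \<Theta>[F](\<lambda>z. inverse (z ^ (2 * m + 1)))"
      by (rule W_diff_bigtheta[OF F])
    have "(\<lambda>z. inverse (z ^ (Suc (2 * m) + 1))) \<in> o[F](\<lambda>z. inverse (z ^ (2 * m + 1)))"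
      by (rule inverse_power_smallo[OF F]) simp
    with W_diff_bigtheta[OF F]
    show "(\<lambda>z. reval (W a (Suc (Suc (2 * m)))) z - reval (W a (Suc (2 * m))) z) \<in> o[F](\<lambda>z. inverse (z ^ (2 * m + 1)))"
      by (rule landau_o.small.bigtheta_trans2)
  qed
  moreover have "reval (J a (Suc m)) z - reval (J a m) z
      = (reval (W a (Suc (2 * m))) z - reval (W a (2 * m)) z)
        + (reval (W a (Suc (Suc (2 * m)))) z - reval (W a (Suc (2 * m))) z)" for z
    by (simp flip: W_even_eq_J)
  ultimately show ?thesis
    by simp
qed

lemma cf_asymp_J_iff:
  assumes F: "F \<le> at_infinity"
  shows "cf_asymp F f (\<lambda>n. reval (J a n))
     \<longleftrightarrow> (\<forall>n. (\<lambda>z. f z - reval (W a n) z) \<in> O[F](\<lambda>z. inverse (z ^ (n + 1))))"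
proof -
  have "cf_asymp F f (\<lambda>n. reval (J a n))
      \<longleftrightarrow> (\<forall>n. (\<lambda>z. f z - reval (J a n) z) \<in> O[F](\<lambda>z. inverse (z ^ (2 * n + 1))))"
  proof (rule cf_asymp_iff_remainders_bigo)
    show "(\<lambda>z. reval (J a (Suc m)) z - reval (J a m) z) \<in> \<Theta>[F](\<lambda>z. inverse (z ^ (2 * m + 1)))" for m
      by (rule J_diff_bigtheta[OF F])
    show "(\<lambda>z. inverse (z ^ (2 * Suc m + 1))) \<in> o[F](\<lambda>z. inverse (z ^ (2 * m + 1)))" for m
      by (rule inverse_power_smallo[OF F]) simp
  qed
  also have "\<dots> \<longleftrightarrow> (\<forall>n. (\<lambda>z. f z - reval (W a n) z) \<in> O[F](\<lambda>z. inverse (z ^ (n + 1))))"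
  proof
    assume "\<forall>n. (\<lambda>z. f z - reval (J a n) z) \<in> O[F](\<lambda>z. inverse (z ^ (2 * n + 1)))"
    then have even: "(\<lambda>z. f z - reval (W a (2 * n)) z) \<in> O[F](\<lambda>z. inverse (z ^ (2 * n + 1)))" for n
      by (simp add: W_even_eq_J)
    show "\<forall>n. (\<lambda>z. f z - reval (W a n) z) \<in> O[F](\<lambda>z. inverse (z ^ (n + 1)))"
      using W_remainders_bigo_if_even[OF F even] by blast
  qed (simp flip: W_even_eq_J)
  finally show ?thesis .
qed

lemma W_even_eq_if_bigo_close:
  assumes F: "F \<le> at_infinity" "F \<noteq> bot"
    and R: "(\<lambda>z. f z - reval (W a (2 * n)) z) \<in> O[F](\<lambda>z. inverse (z ^ (2 * n + 1)))"
    and h: "h \<noteq> 0" "degree h \<le> n"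
    and close: "(\<lambda>z. f z - poly g z / poly h z) \<in> O[F](\<lambda>z. inverse (z ^ (2 * n + 1)))"
  shows "to_fract g / to_fract h = W a (2 * n)"
proof -
  have "to_fract g / to_fract h = to_fract (W_num a (2 * n)) / to_fract (W_den a (2 * n))"
  proof (rule to_fract_eq_if_bigo_close[OF F h(1) W_tail_den_nonzero _ close])
    show "degree h + degree (W_den a (2 * n)) \<le> 2 * n"
      using h(2) W_den_degree[of a "2 * n"] by simp
    show "(\<lambda>z. f z - poly (W_num a (2 * n)) z / poly (W_den a (2 * n)) z)
        \<in> O[F](\<lambda>z. inverse (z ^ (2 * n + 1)))"
      using R by (simp only: reval_W)
  qed
  then show ?thesis
    by (simp add: W_eq_num_div_den)
qed

lemma W_even_eq_if_rdeg_bigo: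
  assumes F: "F \<le> at_infinity" "F \<noteq> bot"
    and R: "(\<lambda>z. f z - reval (W a (2 * n)) z) \<in> O[F](\<lambda>z. inverse (z ^ (2 * n + 1)))"
    and w: "rdeg w \<le> n" "(\<lambda>z. f z - reval w z) \<in> O[F](\<lambda>z. inverse (z ^ (2 * n + 1)))"
  shows "w = W a (2 * n)"
proof -
  obtain p q where l: "lowest_terms w p q"
    using lowest_terms_exists by blast
  then have q: "q \<noteq> 0" "degree q \<le> n" and w_eq: "w = to_fract p / to_fract q"
    using rdeg_lowest_terms[OF l] w(1) by (auto simp: lowest_terms_def)
  have "(\<lambda>z. f z - poly p z / poly q z) \<in> O[F](\<lambda>z. inverse (z ^ (2 * n + 1)))"
    using w(2) by (simp only: reval_lowest_terms[OF l])
  then show ?thesis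
    using W_even_eq_if_bigo_close[OF F R q] w_eq by simp
qed

lemma W_even_unique_approx_iff:
  assumes F: "F \<le> at_infinity" "F \<noteq> bot"
  shows "(\<forall>n. rdeg (W a (2 * n)) \<le> n
            \<and> (\<lambda>z. f z - reval (W a (2 * n)) z) \<in> O[F](\<lambda>z. inverse (z ^ (2 * n + 1)))
            \<and> (\<forall>w. rdeg w \<le> n \<and> (\<lambda>z. f z - reval w z) \<in> O[F](\<lambda>z. inverse (z ^ (2 * n + 1)))
                   \<longrightarrow> w = W a (2 * n)))
     \<longleftrightarrow> (\<forall>n. (\<lambda>z. f z - reval (W a n) z) \<in> O[F](\<lambda>z. inverse (z ^ (n + 1))))"
proof
  assume "\<forall>n. rdeg (W a (2 * n)) \<le> n
            \<and> (\<lambda>z. f z - reval (W a (2 * n)) z) \<in> O[F](\<lambda>z. inverse (z ^ (2 * n + 1)))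
            \<and> (\<forall>w. rdeg w \<le> n \<and> (\<lambda>z. f z - reval w z) \<in> O[F](\<lambda>z. inverse (z ^ (2 * n + 1)))
                   \<longrightarrow> w = W a (2 * n))"
  then have "(\<lambda>z. f z - reval (W a (2 * n)) z) \<in> O[F](\<lambda>z. inverse (z ^ (2 * n + 1)))" for n
    by blast
  then show "\<forall>n. (\<lambda>z. f z - reval (W a n) z) \<in> O[F](\<lambda>z. inverse (z ^ (n + 1)))"
    using W_remainders_bigo_if_even[OF F(1)] by blast
next
  assume D: "\<forall>n. (\<lambda>z. f z - reval (W a n) z) \<in> O[F](\<lambda>z. inverse (z ^ (n + 1)))"
  show "\<forall>n. rdeg (W a (2 * n)) \<le> n
            \<and> (\<lambda>z. f z - reval (W a (2 * n)) z) \<in> O[F](\<lambda>z. inverse (z ^ (2 * n + 1)))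
            \<and> (\<forall>w. rdeg w \<le> n \<and> (\<lambda>z. f z - reval w z) \<in> O[F](\<lambda>z. inverse (z ^ (2 * n + 1)))
                   \<longrightarrow> w = W a (2 * n))"
  proof (intro allI conjI impI)
    fix n
    show R: "(\<lambda>z. f z - reval (W a (2 * n)) z) \<in> O[F](\<lambda>z. inverse (z ^ (2 * n + 1)))"
      using D by blast
    show "rdeg (W a (2 * n)) \<le> n"
      by (simp add: rdeg_W)
    fix w
    assume "rdeg w \<le> n \<and> (\<lambda>z. f z - reval w z) \<in> O[F](\<lambda>z. inverse (z ^ (2 * n + 1)))"
    then show "w = W a (2 * n)"
      using W_even_eq_if_rdeg_bigo[OF F R] by blast
  qed
qed

lemma pade_W_even:
  assumes "n \<ge> 1"
    and R: "(\<lambda>z. f z - reval (W a (2 * n)) z) \<in> O[F](\<lambda>z. inverse (z ^ (2 * n + 1)))"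
  shows "pade_at_inf F f n (W a (2 * n))"
  unfolding pade_at_inf_def
proof (intro exI conjI)
  have "2 * n = Suc (2 * n - 1)" "(2 * n - 1) div 2 = n - 1"
    using assms(1) by simp_all
  then show "degree (W_num a (2 * n)) \<le> n - 1"
    using W_num_degree[of a "2 * n - 1"] by simp
  show "W_den a (2 * n) \<noteq> 0"
    by (rule W_tail_den_nonzero)
  show "degree (W_den a (2 * n)) \<le> n"
    using W_den_degree[of a "2 * n"] by simp
  show "W a (2 * n) = to_fract (W_num a (2 * n)) / to_fract (W_den a (2 * n))"
    by (rule W_eq_num_div_den)
  show "(\<lambda>z. f z - poly (W_num a (2 * n)) z / poly (W_den a (2 * n)) z)
      \<in> O[F](\<lambda>z. inverse (z ^ (2 * n + 1)))"
    using R by (simp only: reval_W)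
qed

lemma pade_eq_W_even:
  assumes F: "F \<le> at_infinity" "F \<noteq> bot"
    and R: "(\<lambda>z. f z - reval (W a (2 * n)) z) \<in> O[F](\<lambda>z. inverse (z ^ (2 * n + 1)))"
    and "pade_at_inf F f n r"
  shows "r = W a (2 * n)"
proof -
  obtain g h where h: "h \<noteq> 0" "degree h \<le> n" and r: "r = to_fract g / to_fract h"
    and close: "(\<lambda>z. f z - poly g z / poly h z) \<in> O[F](\<lambda>z. inverse (z ^ (2 * n + 1)))"
    using assms(4) unfolding pade_at_inf_def by blast
  show ?thesis
    unfolding r by (rule W_even_eq_if_bigo_close[OF F R h close])
qed

lemma W_even_pade_iff:
  assumes F: "F \<le> at_infinity" "F \<noteq> bot"
  shows "(\<forall>n\<ge>1. pade_at_inf F f n (W a (2 * n)) \<and> (\<forall>r. pade_at_inf F f n r \<longrightarrow> r = W a (2 * n)))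
     \<longleftrightarrow> (\<forall>n. (\<lambda>z. f z - reval (W a n) z) \<in> O[F](\<lambda>z. inverse (z ^ (n + 1))))"
proof
  assume "\<forall>n\<ge>1. pade_at_inf F f n (W a (2 * n)) \<and> (\<forall>r. pade_at_inf F f n r \<longrightarrow> r = W a (2 * n))"
  then have "(\<lambda>z. f z - reval (W a (2 * n)) z) \<in> O[F](\<lambda>z. inverse (z ^ (2 * n + 1)))" if "n \<ge> 1" for n
    using that pade_at_inf_imp_bigo[OF F(1)] by blast
  then show "\<forall>n. (\<lambda>z. f z - reval (W a n) z) \<in> O[F](\<lambda>z. inverse (z ^ (n + 1)))"
    using W_remainders_bigo_if_even[OF F(1)] by blast
next
  assume "\<forall>n. (\<lambda>z. f z - reval (W a n) z) \<in> O[F](\<lambda>z. inverse (z ^ (n + 1)))"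
  then have R: "(\<lambda>z. f z - reval (W a (2 * n)) z) \<in> O[F](\<lambda>z. inverse (z ^ (2 * n + 1)))" for n
    by blast
  show "\<forall>n\<ge>1. pade_at_inf F f n (W a (2 * n)) \<and> (\<forall>r. pade_at_inf F f n r \<longrightarrow> r = W a (2 * n))"
    using pade_W_even[OF _ R] pade_eq_W_even[OF F R] by blast
qed

lemma best_rat_approx_eq_W_even:
  assumes F: "F \<le> at_infinity" "F \<noteq> bot"
    and D: "\<And>n. (\<lambda>z. f z - reval (W a n) z) \<in> O[F](\<lambda>z. inverse (z ^ (n + 1)))"
  shows "{w. best_rat_approx F f w} = range (\<lambda>n. W a (2 * n))"
proof (intro equalityI subsetI)
  fix w assume "w \<in> range (\<lambda>n. W a (2 * n))"
  then obtain n where w: "w = W a (2 * n)"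
    by blast
  have R: "(\<lambda>z. f z - reval (W a (2 * n)) z) \<in> O[F](\<lambda>z. inverse (z ^ (2 * n + 1)))"
    by (rule D)
  have "v = w" if v: "rdeg v \<le> rdeg w" "(\<lambda>z. f z - reval v z) \<in> O[F](\<lambda>z. f z - reval w z)" for v
  proof -
    have "(\<lambda>z. f z - reval w z) \<in> O[F](\<lambda>z. inverse (z ^ (2 * n + 1)))"
      using R w by simp
    with v(2) have "(\<lambda>z. f z - reval v z) \<in> O[F](\<lambda>z. inverse (z ^ (2 * n + 1)))"
      by (rule landau_o.big_trans)
    then show "v = w"
      using W_even_eq_if_rdeg_bigo[OF F R] v(1) w by (simp add: rdeg_W)
  qed
  moreover have "(\<lambda>z. f z - reval w z) \<in> O[F](\<lambda>z. f z - reval w z)"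
    by simp
  ultimately show "w \<in> {w. best_rat_approx F f w}"
    unfolding best_rat_approx_def by blast
next
  fix w assume "w \<in> {w. best_rat_approx F f w}"
  then have best: "rdeg v \<le> rdeg w \<and> (\<lambda>z. f z - reval v z) \<in> O[F](\<lambda>z. f z - reval w z) \<longleftrightarrow> v = w" for v
    unfolding best_rat_approx_def by blast
  define d where "d = rdeg w"
  have "(\<lambda>z. f z - reval (W a (2 * d)) z) \<in> O[F](\<lambda>z. f z - reval w z)"
  proof (cases "w = W a (2 * d)")
    case False
    obtain p q where l: "lowest_terms w p q"
      using lowest_terms_exists by blast
    then have q: "q \<noteq> 0" "degree q \<le> d" and w_eq: "w = to_fract p / to_fract q"
      using rdeg_lowest_terms[OF l] by (auto simp: lowest_terms_def d_def)
    have "degree (W_den a (2 * d)) + degree q \<le> 2 * d"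
      using q(2) W_den_degree[of a "2 * d"] by simp
    moreover have "to_fract (W_num a (2 * d)) / to_fract (W_den a (2 * d)) \<noteq> to_fract p / to_fract q"
      using False w_eq by (simp add: W_eq_num_div_den)
    ultimately have "(\<lambda>z. inverse (z ^ (2 * d)))
        \<in> O[F](\<lambda>z. poly (W_num a (2 * d)) z / poly (W_den a (2 * d)) z - poly p z / poly q z)"
      by (intro inverse_power_bigo_fract_diff[OF F(1) W_tail_den_nonzero q(1)])
    then have lower: "(\<lambda>z. inverse (z ^ (2 * d))) \<in> O[F](\<lambda>z. reval (W a (2 * d)) z - reval w z)"
      by (simp only: reval_W reval_lowest_terms[OF l])
    have "(\<lambda>z. f z - reval (W a (2 * d)) z) \<in> O[F](\<lambda>z. inverse (z ^ (2 * d + 1)))"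
      by (rule D)
    also have "(\<lambda>z. inverse (z ^ (2 * d + 1))) \<in> o[F](\<lambda>z. inverse (z ^ (2 * d)))"
      by (rule inverse_power_smallo[OF F(1)]) simp
    also note lower
    finally have "(\<lambda>z. f z - reval (W a (2 * d)) z)
        \<in> O[F](\<lambda>z. (f z - reval (W a (2 * d)) z) + (reval (W a (2 * d)) z - reval w z))"
      by (rule bigo_add_if_smallo)
    then show ?thesis
      by simp
  qed simp
  moreover have "rdeg (W a (2 * d)) \<le> rdeg w"
    by (simp add: rdeg_W d_def)
  ultimately have "W a (2 * d) = w"
    using best by blast
  then show "w \<in> range (\<lambda>n. W a (2 * n))"
    by blast
qed

end

theorem theorem4p2:
  fixes a :: "nat \<Rightarrow> complex" and f :: "complex \<Rightarrow> complex" and X :: "complex set"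
  assumes a_nz: "\<And>n. n \<ge> 1 \<Longrightarrow> a n \<noteq> 0"
  shows
    \<comment> \<open>(1)\<close>
    "(\<forall>n. rdeg (W a n) = (n + 1) div 2)
     \<and> (\<forall>n\<ge>1. asym_equiv at_infinity (reval (W a n)) (\<lambda>z. a 1 / z))
     \<and> (\<forall>n\<ge>1. asym_equiv at_infinity (\<lambda>z. reval (W a n) z - reval (W a (n - 1)) z)
                 (\<lambda>z. (\<Prod>k=1..n. a k) / z ^ n))
     \<and> asym_seq at_infinity (\<lambda>m z. reval (W a (Suc m)) z - reval (W a m) z)
     \<and> (\<forall>n. W a (2 * n) = J a n)
     \<comment> \<open>(2) and (3)\<close>
     \<and> (unbounded_set X \<longrightarrow>
     (let F = at_inf_within X;
          A = cf_asymp F f (\<lambda>n. reval (W a n));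
          B = cf_asymp F f (\<lambda>n. reval (J a n));
          C = (\<forall>n. asym_equiv F (\<lambda>z. f z - reval (W a n) z)
                     (\<lambda>z. (\<Prod>k=1..n+1. a k) / z ^ (n + 1)));
          D = (\<forall>n. (\<lambda>z. f z - reval (W a n) z) \<in> O[F](\<lambda>z. inverse (z ^ (n + 1))));
          E = infinite {n. (\<lambda>z. f z - reval (W a n) z) \<in> O[F](\<lambda>z. inverse (z ^ (n + 1)))};
          G = (\<forall>n. rdeg (W a (2 * n)) \<le> n
                  \<and> (\<lambda>z. f z - reval (W a (2 * n)) z) \<in> O[F](\<lambda>z. inverse (z ^ (2 * n + 1)))
                  \<and> (\<forall>w. rdeg w \<le> n \<and> (\<lambda>z. f z - reval w z) \<in> O[F](\<lambda>z. inverse (z ^ (2 * n + 1)))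
                         \<longrightarrow> w = W a (2 * n)));
          H = (\<forall>n\<ge>1. pade_at_inf F f n (W a (2 * n))
                  \<and> (\<forall>r. pade_at_inf F f n r \<longrightarrow> r = W a (2 * n)))
      in (A \<longleftrightarrow> B) \<and> (A \<longleftrightarrow> C) \<and> (A \<longleftrightarrow> D) \<and> (A \<longleftrightarrow> E) \<and> (A \<longleftrightarrow> G) \<and> (A \<longleftrightarrow> H)
         \<and> (A \<longrightarrow> {w. best_rat_approx F f w} = range (\<lambda>n. W a (2 * n)))))"
proof -
  interpret nonzero_partial_numerators a
    using a_nz by unfold_locales
  show ?thesis
    unfolding Let_def
  proof (intro conjI impI allI)
    show "rdeg (W a n) = (n + 1) div 2" for n
      by (rule rdeg_W)
    show "asym_equiv at_infinity (reval (W a n)) (\<lambda>z. a 1 / z)" if "n \<ge> 1" for n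
      using that W_asymp_equiv[of "n - 1"] by (simp add: asym_equiv_iff_asymp_equiv)
    show "asym_equiv at_infinity (\<lambda>z. reval (W a n) z - reval (W a (n - 1)) z) (\<lambda>z. (\<Prod>k=1..n. a k) / z ^ n)"
      if "n \<ge> 1" for n
      using that W_diff_asymp_equiv[of "n - 1"] by (simp add: asym_equiv_iff_asymp_equiv)
    show "asym_seq at_infinity (\<lambda>m z. reval (W a (Suc m)) z - reval (W a m) z)"
      by (rule asym_seq_if_bigtheta[OF W_diff_bigtheta inverse_power_smallo]) simp_all
    show "W a (2 * n) = J a n" for n
      by (rule W_even_eq_J)
    show "{w. best_rat_approx (at_inf_within X) f w} = range (\<lambda>n. W a (2 * n))"
      if "unbounded_set X" "cf_asymp (at_inf_within X) f (\<lambda>n. reval (W a n))"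
      using that cf_asymp_W_iff[OF at_inf_within_le_at_infinity]
      by (intro best_rat_approx_eq_W_even at_inf_within_le_at_infinity at_inf_within_neq_bot) auto
  \<comment> \<open>Each remaining equivalence holds because both sides are equivalent to condition (d).\<close>
  qed (simp_all only: cf_asymp_W_iff[OF at_inf_within_le_at_infinity]
      cf_asymp_J_iff[OF at_inf_within_le_at_infinity]
      W_remainders_asymp_equiv_iff[OF at_inf_within_le_at_infinity]
      W_remainders_bigo_iff_infinite[OF at_inf_within_le_at_infinity]
      W_even_unique_approx_iff[OF at_inf_within_le_at_infinity at_inf_within_neq_bot]
      W_even_pade_iff[OF at_inf_within_le_at_infinity at_inf_within_neq_bot])
qed

end
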